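(* In the family of directed acyclic graphs, the Geometric Mechanism satisfies incentive compatibility and fairness.
   Context: Setting: agents $N=\{1,\dots,n\}$ form a directed acyclic graph (DAG); an edge $(i,j)$ means $i$ follows $j$. Agent $i$'s type $\theta_i$ is her set of true out-edges; she reports $\theta_i'\subseteq\theta_i$ (she can only hide edges). $G(\theta')$ is the graph built from the report profile $\theta'$. $P_i$ is the set of agents that can reach $i$ by a directed path (including $i$), and $p_i=|P_i|$ is $i$'s progeny. Write $p_i\succ p_j$ if $p_i>p_j$, or $p_i=p_j$ and $i<j$. A selection mechanism maps each report profile to selection probabilities $x_i(\theta')\in[0,1]$ with $\sum_i x_i(\theta')\le 1$. Influential node: agent $i$ is influential in $G(\theta')$ if, after deleting all of $i$'s out-edges (profile $(\theta'_{-i},\emptyset)$), $p_i\succ p_j$ for all $j\neq i$ in that modified graph. The influential set $S^{inf.}(G(\theta'))=\{s_1,\dots,s_m\}$ is the set of influential nodes, ordered so that $s_1\succ s_2\succ\cdots\succ s_m$ by progeny in $G(\theta')$. Geometric Mechanism: compute $S^{inf.}(G(\theta'))=\{s_1,\dots,s_m\}$; select $s_j$ with probability $1/2^{m-j+1}$, and every agent outside the influential set with probability $0$. Incentive compatibility: for all $N$, all $i$, all true profiles $\theta$, all $\theta'_{-i}$ with $\theta'_k\subseteq\theta_k$ for $k\neq i$, and all $\theta_i'\subseteq\theta_i$, $x_i((\theta_i,\theta'_{-i}))\ge x_i((\theta_i',\theta'_{-i}))$. Fairness: for a graph $G=(N,E)$, let $G(i)=(P_i,E_i)$ be the subgraph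 induced by $i$'s progeny, with $E_i=\{(j,k)\in E: j,k\in P_i\}$. A mechanism is fair if for all $N$ and all DAGs $G,G'$ on $n$ nodes with $S^{inf.}(G)=S^{inf.}(G')=\{s_1,\dots,s_m\}$ and $G(s_1)=G'(s_1)$, we have $x_{s_1}(G)=x_{s_1}(G')$. *)

theory Defs
  imports Complex_Main
begin

text \<open>Agents are 1..n. A report profile is a function giving each agent her set of
 out-neighbours; the graph G(theta) has edge (i,j) iff i is an agent and j is in theta i
 (i follows j).\<close>

definition agents :: "nat \<Rightarrow> nat set" where
  "agents n = {1..n}"

definition graph_of :: "nat \<Rightarrow> (nat \<Rightarrow> nat set) \<Rightarrow> (nat \<times> nat) set" where
  "graph_of n \<theta> = {(i, j). i \<in> agents n \<and> j \<in> \<theta> i}"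

definition is_dag :: "nat \<Rightarrow> (nat \<times> nat) set \<Rightarrow> bool" where
  "is_dag n E \<longleftrightarrow> E \<subseteq> agents n \<times> agents n \<and> acyclic E"

definition progeny :: "nat \<Rightarrow> (nat \<times> nat) set \<Rightarrow> nat \<Rightarrow> nat set" where
  "progeny n E i = {j \<in> agents n. (j, i) \<in> E\<^sup>*}"

definition prog :: "nat \<Rightarrow> (nat \<times> nat) set \<Rightarrow> nat \<Rightarrow> nat" where
  "prog n E i = card (progeny n E i)"

definition prog_succ :: "nat \<Rightarrow> (nat \<times> nat) set \<Rightarrow> nat \<Rightarrow> nat \<Rightarrow> bool" where
  "prog_succ n E i j \<longleftrightarrow> prog n E i > prog n E j \<or> (prog n E i = prog n E j \<and> i < j)"

definition influential :: "nat \<Rightarrow> (nat \<times> nat) set \<Rightarrow> nat \<Rightarrow> bool" where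
  "influential n E i \<longleftrightarrow> i \<in> agents n \<and>
     (\<forall>j \<in> agents n. j \<noteq> i \<longrightarrow> prog_succ n (E - {i} \<times> UNIV) i j)"

definition inf_set :: "nat \<Rightarrow> (nat \<times> nat) set \<Rightarrow> nat set" where
  "inf_set n E = {i. influential n E i}"

text \<open>Geometric mechanism: if S = {s_1 \<succ> ... \<succ> s_m}, then s_j gets 1/2^(m-j+1);
 m-j+1 is the number of elements t of S with t = s_j or s_j \<succ> t (order in G).\<close>
definition geometric :: "nat \<Rightarrow> (nat \<times> nat) set \<Rightarrow> nat \<Rightarrow> real" where
  "geometric n E i =
     (if i \<in> inf_set n E
      then 1 / 2 ^ card {t \<in> inf_set n E. t = i \<or> prog_succ n E i t}
      else 0)"

type_synonym mechanism = "nat \<Rightarrow> (nat \<times> nat) set \<Rightarrow> nat \<Rightarrow> real"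

definition incentive_compatible :: "mechanism \<Rightarrow> bool" where
  "incentive_compatible x \<longleftrightarrow>
     (\<forall>n i \<theta> \<theta>'. is_dag n (graph_of n \<theta>) \<and> i \<in> agents n \<and>
        (\<forall>k \<in> agents n. \<theta>' k \<subseteq> \<theta> k) \<longrightarrow>
        x n (graph_of n (\<theta>'(i := \<theta> i))) i \<ge> x n (graph_of n \<theta>') i)"

definition induced_sub :: "nat \<Rightarrow> (nat \<times> nat) set \<Rightarrow> nat \<Rightarrow> nat set \<times> (nat \<times> nat) set" where
  "induced_sub n E i = (progeny n E i, E \<inter> (progeny n E i \<times> progeny n E i))"

definition fair :: "mechanism \<Rightarrow> bool" where
  "fair x \<longleftrightarrow>
     (\<forall>n G G' s1. is_dag n G \<and> is_dag n G' \<and> inf_set n G = inf_set n G' \<and>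
        s1 \<in> inf_set n G \<and> (\<forall>t \<in> inf_set n G. t \<noteq> s1 \<longrightarrow> prog_succ n G s1 t) \<and>
        (\<forall>t \<in> inf_set n G'. t \<noteq> s1 \<longrightarrow> prog_succ n G' s1 t) \<and>
        induced_sub n G s1 = induced_sub n G' s1
        \<longrightarrow> x n G s1 = x n G' s1)"

end

theory Submission
  imports Defs
begin

text \<open>Whether agent \<open>i\<close> is influential is decided in the graph with \<open>i\<close>'s out-edges deleted,
  so hiding edges cannot change it. If \<open>i\<close> is influential, every influential \<open>t\<close> ranked below
  \<open>i\<close> must reach \<open>i\<close> (two influential nodes are always comparable by reachability), and such a
  path does not use \<open>i\<close>'s out-edges. Hence \<open>t\<close> stays below \<open>i\<close> and stays influential when \<open>i\<close>
  hides edges: the number \<open>k\<close> of influential agents ranked at or below \<open>i\<close> can only grow, and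
  \<open>i\<close>'s probability \<open>1/2^k\<close> can only shrink. Fairness holds because the top influential
  agent gets \<open>1/2^m\<close>, with \<open>m\<close> the size of the influential set.\<close>

definition inf_dominated :: "nat \<Rightarrow> (nat \<times> nat) set \<Rightarrow> nat \<Rightarrow> nat set" where
  "inf_dominated n E i = {t \<in> inf_set n E. t = i \<or> prog_succ n E i t}"

lemma geometric_eq:
  "geometric n E i = (if i \<in> inf_set n E then 1 / 2 ^ card (inf_dominated n E i) else 0)"
  unfolding geometric_def inf_dominated_def ..

lemma inf_set_subset_agents: "inf_set n E \<subseteq> agents n"
  unfolding inf_set_def influential_def by auto

lemma finite_inf_set: "finite (inf_set n E)"
  by (rule finite_subset[OF inf_set_subset_agents]) (simp add: agents_def)

lemma rtrancl_Diff_out_edges: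
  assumes "(j, t) \<in> E\<^sup>*" "(s, t) \<notin> E\<^sup>+"
  shows "(j, t) \<in> (E - {s} \<times> UNIV)\<^sup>*"
  using assms(1)
proof (induction rule: converse_rtrancl_induct)
  case base
  then show ?case by simp
next
  case (step y z)
  have "y \<noteq> s" using step.hyps assms(2) by (metis rtrancl_into_trancl2)
  with step show ?case by (blast intro: converse_rtrancl_into_rtrancl)
qed

lemma trancl_Diff_out_edges:
  assumes "(j, t) \<in> E\<^sup>+" "(s, t) \<notin> E\<^sup>+"
  shows "(j, t) \<in> (E - {s} \<times> UNIV)\<^sup>+"
proof -
  obtain k where "(j, k) \<in> E" "(k, t) \<in> E\<^sup>*"
    using assms(1) by (meson tranclD)
  moreover have "j \<noteq> s"
    using assms \<open>(j, k) \<in> E\<close> \<open>(k, t) \<in> E\<^sup>*\<close> rtrancl_into_trancl2 by metis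
  ultimately show ?thesis
    using rtrancl_Diff_out_edges[OF _ assms(2)] by (blast intro: rtrancl_into_trancl2)
qed

lemma progeny_Diff_out_edges:
  assumes "(s, x) \<notin> E\<^sup>+"
  shows "progeny n (E - {s} \<times> UNIV) x = progeny n E x"
  unfolding progeny_def
  using rtrancl_Diff_out_edges[OF _ assms] rtrancl_mono[of "E - {s} \<times> UNIV" E] by blast

lemma finite_progeny: "finite (progeny n E x)"
  unfolding progeny_def agents_def by auto

lemma progeny_mono: "E' \<subseteq> E \<Longrightarrow> progeny n E' x \<subseteq> progeny n E x"
  unfolding progeny_def using rtrancl_mono by blast

lemma prog_mono: "E' \<subseteq> E \<Longrightarrow> prog n E' x \<le> prog n E x"
  unfolding prog_def by (simp add: card_mono finite_progeny progeny_mono)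

lemma prog_less_if_trancl:
  assumes "acyclic E" "(t, i) \<in> E\<^sup>+" "i \<in> agents n"
  shows "prog n E t < prog n E i"
proof -
  have "progeny n E t \<subseteq> progeny n E i"
    unfolding progeny_def using assms(2) by auto
  moreover have "i \<in> progeny n E i"
    unfolding progeny_def using assms(3) by auto
  moreover have "i \<notin> progeny n E t"
    using assms(1,2) unfolding progeny_def acyclic_def
    by (auto dest: rtrancl_trancl_trancl)
  ultimately have "progeny n E t \<subset> progeny n E i" by blast
  then show ?thesis
    unfolding prog_def by (simp add: psubset_card_mono finite_progeny)
qed

lemma prog_succ_asym: "prog_succ n E a b \<Longrightarrow> \<not> prog_succ n E b a"
  by (auto simp: prog_succ_def)

lemma prog_succ_if_trancl:
  "acyclic E \<Longrightarrow> (t, i) \<in> E\<^sup>+ \<Longrightarrow> i \<in> agents n \<Longrightarrow> prog_succ n E i t"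
  using prog_less_if_trancl unfolding prog_succ_def by blast

lemma prog_succ_transfer:
  assumes "prog_succ n E i j" "prog n E i \<le> prog n E' i" "prog n E' j \<le> prog n E j"
  shows "prog_succ n E' i j"
  using assms unfolding prog_succ_def by auto

lemma prog_succ_Diff_out_edges:
  assumes "(s, s) \<notin> E\<^sup>+" "(s, t) \<notin> E\<^sup>+" "prog_succ n (E - {s} \<times> UNIV) s t"
  shows "prog_succ n E s t"
  using assms unfolding prog_succ_def prog_def by (simp add: progeny_Diff_out_edges)

lemma influential_trancl_comparable:
  assumes "acyclic E" "influential n E s" "influential n E t" "s \<noteq> t"
  shows "(s, t) \<in> E\<^sup>+ \<or> (t, s) \<in> E\<^sup>+"
proof (rule ccontr)
  assume incomparable: "\<not> ((s, t) \<in> E\<^sup>+ \<or> (t, s) \<in> E\<^sup>+)"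
  have "(s, s) \<notin> E\<^sup>+" "(t, t) \<notin> E\<^sup>+"
    using assms(1) unfolding acyclic_def by auto
  moreover have "prog_succ n (E - {s} \<times> UNIV) s t" "prog_succ n (E - {t} \<times> UNIV) t s"
    using assms(2-4) unfolding influential_def by auto
  ultimately have "prog_succ n E s t" "prog_succ n E t s"
    using incomparable prog_succ_Diff_out_edges by auto
  then show False using prog_succ_asym by blast
qed

lemma influential_dominated_trancl:
  assumes "acyclic E" "influential n E i" "influential n E t" "t \<noteq> i" "prog_succ n E i t"
  shows "(t, i) \<in> E\<^sup>+"
proof (rule ccontr)
  assume "(t, i) \<notin> E\<^sup>+"
  then have "(i, t) \<in> E\<^sup>+"
    using influential_trancl_comparable[OF assms(1-3)] assms(4) by blast
  then have "prog_succ n E t i"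
    using assms(1,3) prog_succ_if_trancl unfolding influential_def by blast
  then show False using assms(5) prog_succ_asym by blast
qed

lemma influential_eq_if_agree_off_out_edges:
  assumes "L \<subseteq> F" "F - {i} \<times> UNIV \<subseteq> L"
  shows "influential n L i = influential n F i"
proof -
  have "L - {i} \<times> UNIV = F - {i} \<times> UNIV" using assms by blast
  then show ?thesis unfolding influential_def by simp
qed

text \<open>Deleting out-edges of \<open>i\<close> keeps every node that \<open>i\<close> cannot reach influential: the
  progeny of \<open>t\<close> does not change, while all other progenies can only shrink.\<close>

lemma influential_Diff_out_edges:
  assumes "L \<subseteq> F" "F - {i} \<times> UNIV \<subseteq> L" "(i, t) \<notin> F\<^sup>+" "influential n F t"
  shows "influential n L t"
  unfolding influential_def
proof (intro conjI ballI impI)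
  show "t \<in> agents n" using assms(4) unfolding influential_def by blast
  define Ft where "Ft = F - {t} \<times> UNIV"
  define Lt where "Lt = L - {t} \<times> UNIV"
  have "Lt \<subseteq> Ft" "Ft - {i} \<times> UNIV \<subseteq> Lt"
    using assms(1,2) unfolding Ft_def Lt_def by auto
  have "(i, t) \<notin> Ft\<^sup>+"
    using assms(3) trancl_mono[of _ Ft F] unfolding Ft_def by blast
  then have "progeny n Ft t = progeny n (Ft - {i} \<times> UNIV) t"
    by (simp add: progeny_Diff_out_edges)
  also have "\<dots> \<subseteq> progeny n Lt t"
    using \<open>Ft - {i} \<times> UNIV \<subseteq> Lt\<close> by (rule progeny_mono)
  finally have "prog n Ft t \<le> prog n Lt t"
    unfolding prog_def by (simp add: card_mono finite_progeny)
  fix j assume "j \<in> agents n" "j \<noteq> t"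
  then have "prog_succ n Ft t j"
    using assms(4) unfolding influential_def Ft_def by blast
  with \<open>prog n Ft t \<le> prog n Lt t\<close> \<open>Lt \<subseteq> Ft\<close> show "prog_succ n (L - {t} \<times> UNIV) t j"
    unfolding Lt_def[symmetric] by (blast intro: prog_succ_transfer prog_mono)
qed

lemma inf_dominated_Diff_out_edges:
  assumes "acyclic F" "L \<subseteq> F" "F - {i} \<times> UNIV \<subseteq> L" "influential n F i"
  shows "inf_dominated n F i \<subseteq> inf_dominated n L i"
proof
  fix t assume "t \<in> inf_dominated n F i"
  then have t: "influential n F t" "t = i \<or> prog_succ n F i t"
    unfolding inf_dominated_def inf_set_def by auto
  have i_L: "influential n L i"
    using assms(4) influential_eq_if_agree_off_out_edges[OF assms(2,3)] by blast
  show "t \<in> inf_dominated n L i"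
  proof (cases "t = i")
    case True
    with i_L show ?thesis unfolding inf_dominated_def inf_set_def by simp
  next
    case False
    then have "(t, i) \<in> F\<^sup>+"
      using influential_dominated_trancl[OF assms(1,4)] t by blast
    have "(i, i) \<notin> F\<^sup>+" using assms(1) unfolding acyclic_def by blast
    then have "(t, i) \<in> L\<^sup>+"
      using trancl_Diff_out_edges[OF \<open>(t, i) \<in> F\<^sup>+\<close>] trancl_mono assms(3) by blast
    moreover have "acyclic L" using assms(1,2) acyclic_subset by blast
    ultimately have "prog_succ n L i t"
      using i_L prog_succ_if_trancl unfolding influential_def by blast
    moreover have "(i, t) \<notin> F\<^sup>+"
      using \<open>(t, i) \<in> F\<^sup>+\<close> \<open>(i, i) \<notin> F\<^sup>+\<close> by (meson trancl_trans)
    then have "influential n L t"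
      using influential_Diff_out_edges[OF assms(2,3)] t(1) by blast
    ultimately show ?thesis unfolding inf_dominated_def inf_set_def by simp
  qed
qed

lemma geometric_Diff_out_edges_le:
  assumes "acyclic F" "L \<subseteq> F" "F - {i} \<times> UNIV \<subseteq> L"
  shows "geometric n L i \<le> geometric n F i"
proof (cases "influential n F i")
  case True
  have "finite (inf_dominated n L i)"
    unfolding inf_dominated_def using finite_inf_set by simp
  then have "card (inf_dominated n F i) \<le> card (inf_dominated n L i)"
    using inf_dominated_Diff_out_edges[OF assms True] by (rule card_mono)
  then have "(1::real) / 2 ^ card (inf_dominated n L i) \<le> 1 / 2 ^ card (inf_dominated n F i)"
    by (simp add: frac_le power_increasing)
  with True show ?thesis by (simp add: geometric_eq inf_set_def)
next
  case False
  then have "\<not> influential n L i"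
    using influential_eq_if_agree_off_out_edges[OF assms(2,3)] by blast
  with False show ?thesis by (simp add: geometric_eq inf_set_def)
qed

lemma graph_of_mono: "(\<forall>k \<in> agents n. \<theta>' k \<subseteq> \<theta> k) \<Longrightarrow> graph_of n \<theta>' \<subseteq> graph_of n \<theta>"
  unfolding graph_of_def by blast

lemma incentive_compatible_geometric: "incentive_compatible geometric"
  unfolding incentive_compatible_def
proof (intro allI impI, elim conjE)
  fix n i \<theta> \<theta>'
  assume "is_dag n (graph_of n \<theta>)" "i \<in> agents n" and reports: "\<forall>k \<in> agents n. \<theta>' k \<subseteq> \<theta> k"
  let ?F = "graph_of n (\<theta>'(i := \<theta> i))" and ?L = "graph_of n \<theta>'"
  have "?F \<subseteq> graph_of n \<theta>" "?L \<subseteq> ?F"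
    using reports \<open>i \<in> agents n\<close> by (intro graph_of_mono; auto)+
  moreover have "?F - {i} \<times> UNIV \<subseteq> ?L" unfolding graph_of_def by auto
  moreover have "acyclic (graph_of n \<theta>)"
    using \<open>is_dag n (graph_of n \<theta>)\<close> unfolding is_dag_def by blast
  ultimately show "geometric n ?L i \<le> geometric n ?F i"
    using acyclic_subset geometric_Diff_out_edges_le by metis
qed

lemma geometric_top:
  assumes "s \<in> inf_set n E" "\<forall>t \<in> inf_set n E. t \<noteq> s \<longrightarrow> prog_succ n E s t"
  shows "geometric n E s = 1 / 2 ^ card (inf_set n E)"
proof -
  have "inf_dominated n E s = inf_set n E"
    using assms(2) unfolding inf_dominated_def by blast
  with assms(1) show ?thesis by (simp add: geometric_eq)
qed

lemma fair_geometric: "fair geometric"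
  unfolding fair_def by (metis geometric_top)

theorem theorem1:
  shows "incentive_compatible geometric \<and> fair geometric"
  using incentive_compatible_geometric fair_geometric by blast

end
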